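(* Convolution $(\sigma,\tau)\mapsto\sigma*\tau$ is a separately continuous map from $\mathcal T\times\mathcal T$ to $\mathcal T$.
   Context: Standing setting: $(X,\|\cdot\|)$ is a separable infinite-dimensional Banach space and $d$ is a translation-invariant stable pseudometric on $X$ such that $\mathrm{Id}\colon(X,\|\cdot\|)\to(X,d)$ is a coarse equivalence ($\omega_{\mathrm{Id}}(t)=\sup\{d(x,y):\|x-y\|\le t\}<\infty$ for all $t$, $\rho_{\mathrm{Id}}(t)=\inf\{d(x,y):\|x-y\|\ge t\}\to\infty$). $\Delta$ is a countable $\|\cdot\|$-dense $\mathbb Q$-linear subspace of $X$; for $x\in\Delta$, $\bar x(\lambda,y)=d(\lambda x,y)$. $\mathcal T$ is the closure of $\{\bar x:x\in\Delta\}$ in $\mathbb R^{\mathbb Q\times\Delta}$ (pointwise topology); a defining sequence for $\sigma\in\mathcal T$ is $(x_n)\subseteq\Delta$ with $\bar x_n\to\sigma$. For $\sigma,\tau\in\mathcal T$ with defining sequences $(x_n),(y_m)$, the convolution is $\sigma*\tau=\lim_n\lim_m\overline{x_n+y_m}$ (this exists and is independent of the defining sequences). *)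

theory Defs
  imports "HOL-Analysis.Analysis"
begin

definition pseudometric :: "('a \<Rightarrow> 'a \<Rightarrow> real) \<Rightarrow> bool" where
  "pseudometric d \<longleftrightarrow> (\<forall>x. d x x = 0) \<and> (\<forall>x y. d x y = d y x)
      \<and> (\<forall>x y z. d x z \<le> d x y + d y z)"

definition translation_invariant :: "('a::real_normed_vector \<Rightarrow> 'a \<Rightarrow> real) \<Rightarrow> bool" where
  "translation_invariant d \<longleftrightarrow> (\<forall>x y z. d (x + z) (y + z) = d x y)"

definition stable_pseudometric :: "('a::real_normed_vector \<Rightarrow> 'a \<Rightarrow> real) \<Rightarrow> bool" where
  "stable_pseudometric d \<longleftrightarrow>
     (\<forall>(x::nat \<Rightarrow> 'a) (y::nat \<Rightarrow> 'a) a b.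
        bounded (range x) \<and> bounded (range y) \<and>
        (\<exists>f. (\<forall>n. (\<lambda>m. d (x n) (y m)) \<longlonglongrightarrow> f n) \<and> f \<longlonglongrightarrow> a) \<and>
        (\<exists>g. (\<forall>m. (\<lambda>n. d (x n) (y m)) \<longlonglongrightarrow> g m) \<and> g \<longlonglongrightarrow> b)
        \<longrightarrow> a = b)"

definition omega_Id :: "('a::real_normed_vector \<Rightarrow> 'a \<Rightarrow> real) \<Rightarrow> real \<Rightarrow> real" where
  "omega_Id d t = Sup {d x y | x y. norm (x - y) \<le> t}"

definition rho_Id :: "('a::real_normed_vector \<Rightarrow> 'a \<Rightarrow> real) \<Rightarrow> real \<Rightarrow> real" where
  "rho_Id d t = Inf {d x y | x y. norm (x - y) \<ge> t}"

definition coarse_equivalence_Id :: "('a::real_normed_vector \<Rightarrow> 'a \<Rightarrow> real) \<Rightarrow> bool" where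
  "coarse_equivalence_Id d \<longleftrightarrow>
     (\<forall>t. bdd_above {d x y | x y. norm (x - y) \<le> t}) \<and> filterlim (rho_Id d) at_top at_top"

definition Q_linear_subspace :: "'a::real_vector set \<Rightarrow> bool" where
  "Q_linear_subspace D \<longleftrightarrow> 0 \<in> D \<and> (\<forall>x\<in>D. \<forall>y\<in>D. x + y \<in> D)
      \<and> (\<forall>x\<in>D. \<forall>q::rat. of_rat q *\<^sub>R x \<in> D)"

text \<open>The function xbar(lambda,y) = d(lambda x, y) on Q \<times> Delta, as an element of
  R^(Q \<times> Delta) (coordinates outside Q \<times> Delta are set to 0 and play no role).
  The function space carries the product (pointwise) topology.\<close>
definition xbar :: "('a::real_normed_vector \<Rightarrow> 'a \<Rightarrow> real) \<Rightarrow> 'a set \<Rightarrow> 'a \<Rightarrow> (rat \<times> 'a \<Rightarrow> real)" where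
  "xbar d D x = (\<lambda>(q, y). if y \<in> D then d (of_rat q *\<^sub>R x) y else 0)"

definition types_space :: "('a::real_normed_vector \<Rightarrow> 'a \<Rightarrow> real) \<Rightarrow> 'a set \<Rightarrow> (rat \<times> 'a \<Rightarrow> real) set" where
  "types_space d D = closure (xbar d D ` D)"

definition defining_seq :: "('a::real_normed_vector \<Rightarrow> 'a \<Rightarrow> real) \<Rightarrow> 'a set \<Rightarrow> (rat \<times> 'a \<Rightarrow> real) \<Rightarrow> (nat \<Rightarrow> 'a) \<Rightarrow> bool" where
  "defining_seq d D \<sigma> x \<longleftrightarrow> (\<forall>n. x n \<in> D) \<and> (\<lambda>n. xbar d D (x n)) \<longlonglongrightarrow> \<sigma>"

definition conv :: "('a::real_normed_vector \<Rightarrow> 'a \<Rightarrow> real) \<Rightarrow> 'a set \<Rightarrow> (rat \<times> 'a \<Rightarrow> real) \<Rightarrow> (rat \<times> 'a \<Rightarrow> real) \<Rightarrow> (rat \<times> 'a \<Rightarrow> real)" where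
  "conv d D \<sigma> \<tau> = (THE \<rho>. \<forall>x y. defining_seq d D \<sigma> x \<and> defining_seq d D \<tau> y \<longrightarrow>
      (\<exists>f. (\<forall>n. (\<lambda>m. xbar d D (x n + y m)) \<longlonglongrightarrow> f n) \<and> f \<longlonglongrightarrow> \<rho>))"

end

theory Submission
  imports Defs
begin

text \<open>Let \<open>(x\<^sub>n)\<close> and \<open>(y\<^sub>m)\<close> be defining sequences of \<open>\<sigma>\<close> and \<open>\<tau>\<close>. By translation invariance
  \<open>d(q(x\<^sub>n + y\<^sub>m), z) = d(q x\<^sub>n, z - q y\<^sub>m) = d(q y\<^sub>m, z - q x\<^sub>n)\<close>, whose limit in \<open>m\<close> is
  \<open>\<tau>(q, z - q x\<^sub>n)\<close> and whose limit in \<open>n\<close> is \<open>\<sigma>(q, z - q y\<^sub>m)\<close>. The coarse equivalence makes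
  all these sequences bounded, so stability forces the two iterated limits to agree:
  \<open>(\<sigma> * \<tau>)(q, z) = lim\<^sub>n \<tau>(q, z - q x\<^sub>n) = lim\<^sub>m \<sigma>(q, z - q y\<^sub>m)\<close>. Hence convolution lands in
  \<open>\<T>\<close> and is commutative, and continuity in \<open>\<tau>\<close> follows by a diagonal argument: if \<open>\<tau>\<^sub>k \<rightarrow> \<tau>\<close>,
  picking the \<open>k\<close>-th point far out along a defining sequence of \<open>\<tau>\<^sub>k\<close> yields a defining sequence
  of \<open>\<tau>\<close> along which \<open>\<sigma>(q, z - q y)\<close> tracks \<open>(\<sigma> * \<tau>\<^sub>k)(q, z)\<close>. Only the countably many
  coordinates in \<open>\<bbbQ> \<times> \<Delta>\<close> matter, so sequences suffice to describe closure and continuity.\<close>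

lemma LIMSEQ_close_to:
  fixes a b :: "nat \<Rightarrow> 'b::real_normed_vector"
  assumes "eventually (\<lambda>n. dist (a n) (b n) < inverse (real (Suc n))) sequentially" and "b \<longlonglongrightarrow> L"
  shows "a \<longlonglongrightarrow> L"
proof (rule Lim_transform[OF assms(2)])
  show "(\<lambda>n. a n - b n) \<longlonglongrightarrow> 0"
  proof (rule Lim_null_comparison)
    show "eventually (\<lambda>n. norm (a n - b n) \<le> inverse (real (Suc n))) sequentially"
      using assms(1) by eventually_elim (simp add: dist_norm)
  qed (rule LIMSEQ_inverse_real_of_nat)
qed

lemma bounded_LIMSEQ_of_subseq_limits:
  fixes F :: "nat \<Rightarrow> real"
  assumes "bounded (range F)" and "\<And>r \<alpha>. strict_mono r \<Longrightarrow> (F \<circ> r) \<longlonglongrightarrow> \<alpha> \<Longrightarrow> \<alpha> = \<beta>"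
  shows "F \<longlonglongrightarrow> \<beta>"
proof (rule ccontr)
  assume "\<not> F \<longlonglongrightarrow> \<beta>"
  then obtain e where e: "e > 0" and ne: "\<not> eventually (\<lambda>n. dist (F n) \<beta> < e) sequentially"
    unfolding tendsto_iff by blast
  then obtain r :: "nat \<Rightarrow> nat" where r: "strict_mono r" and far: "\<forall>n. \<not> dist (F (r n)) \<beta> < e"
    using not_eventually_sequentiallyD[OF ne] by blast
  have "bounded (range (F \<circ> r))" using assms(1) by (rule bounded_subset) auto
  then obtain l s where s: "strict_mono s" and l: "((F \<circ> r) \<circ> s) \<longlonglongrightarrow> l"
    using bounded_imp_convergent_subsequence by blast
  have "l = \<beta>" using assms(2)[of "r \<circ> s" l] l r s by (simp add: strict_mono_o o_assoc)
  then have "eventually (\<lambda>n. dist (((F \<circ> r) \<circ> s) n) \<beta> < e) sequentially"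
    using l e tendsto_iff by blast
  then show False using far by (auto simp: eventually_sequentially)
qed

subsection \<open>Sequences in the product topology\<close>

lemma tendsto_fun_iff:
  fixes f :: "'c \<Rightarrow> 'i \<Rightarrow> 'b::topological_space"
  shows "(f \<longlongrightarrow> l) F \<longleftrightarrow> (\<forall>i. ((\<lambda>c. f c i) \<longlongrightarrow> l i) F)"
  using limitin_componentwise[of "\<lambda>i. euclidean" UNIV f l F]
  by (simp add: euclidean_product_topology)

lemma LIMSEQ_fun_unique:
  fixes s :: "nat \<Rightarrow> 'i \<Rightarrow> 'b::t2_space"
  assumes "s \<longlonglongrightarrow> a" and "s \<longlonglongrightarrow> b"
  shows "a = b"
  using assms by (auto simp: tendsto_fun_iff intro: LIMSEQ_unique)

lemma closed_vanishing_outside: "closed {f :: 'i \<Rightarrow> 'b::{zero,t2_space}. \<forall>i. i \<notin> C \<longrightarrow> f i = 0}"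
proof -
  have "closed {f :: 'i \<Rightarrow> 'b. f i = 0}" for i
    by (rule closed_Collect_eq) simp_all
  then have "closed (\<Inter>i\<in>-C. {f :: 'i \<Rightarrow> 'b. f i = 0})" by blast
  moreover have "(\<Inter>i\<in>-C. {f :: 'i \<Rightarrow> 'b. f i = 0}) = {f. \<forall>i. i \<notin> C \<longrightarrow> f i = 0}" by auto
  ultimately show ?thesis by simp
qed

lemma exists_sequence_tendsto_on_coordinates:
  fixes t :: "'i \<Rightarrow> real"
  assumes C: "countable C" and near: "\<And>U. open U \<Longrightarrow> t \<in> U \<Longrightarrow> \<exists>y\<in>S. y \<in> U"
  shows "\<exists>s. (\<forall>n. s n \<in> S) \<and> (\<forall>i\<in>C. (\<lambda>n. s n i) \<longlonglongrightarrow> t i)"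
proof (cases "C = {}")
  case True
  then show ?thesis using near[of UNIV] by auto
next
  case False
  define e where "e = from_nat_into C"
  define U where "U n = {f. \<forall>j\<in>{..n}. f (e j) \<in> ball (t (e j)) (inverse (real (Suc n)))}" for n
  have "open (U n)" for n unfolding U_def by (rule product_topology_basis') auto
  moreover have "t \<in> U n" for n by (simp add: U_def)
  ultimately have "\<forall>n. \<exists>y. y \<in> S \<and> y \<in> U n" using near by blast
  then obtain s where s: "\<And>n. s n \<in> S" and sU: "\<And>n. s n \<in> U n" by metis
  have "(\<lambda>n. s n (e j)) \<longlonglongrightarrow> t (e j)" for j
  proof (rule LIMSEQ_close_to[OF _ tendsto_const])
    show "eventually (\<lambda>n. dist (s n (e j)) (t (e j)) < inverse (real (Suc n))) sequentially"
      using sU unfolding U_def eventually_sequentially by (auto simp: dist_commute)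
  qed
  moreover have "C = range e" using C False by (simp add: e_def range_from_nat_into)
  ultimately show ?thesis using s by blast
qed

lemma closure_imp_sequence_vanishing_outside:
  fixes S :: "('i \<Rightarrow> real) set"
  assumes C: "countable C" and S: "S \<subseteq> {f. \<forall>i. i \<notin> C \<longrightarrow> f i = 0}" and g: "g \<in> closure S"
  shows "\<exists>s. (\<forall>n. s n \<in> S) \<and> s \<longlonglongrightarrow> g"
proof -
  have "\<exists>y\<in>S. y \<in> U" if "open U" "g \<in> U" for U
    using closure_iff_nhds_not_empty[THEN iffD1, OF g, rule_format, of U U] that by blast
  from exists_sequence_tendsto_on_coordinates[OF C this]
  obtain s where s: "\<And>n. s n \<in> S" and lim: "\<forall>i\<in>C. (\<lambda>n. s n i) \<longlonglongrightarrow> g i"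
    by blast
  have "(\<lambda>n. s n i) \<longlonglongrightarrow> g i" for i
  proof (cases "i \<in> C")
    case False
    then have "g i = 0" using closure_minimal[OF S closed_vanishing_outside] g by blast
    moreover have "s n i = 0" for n using False S s by blast
    ultimately show ?thesis by simp
  qed (use lim in blast)
  then show ?thesis using s by (auto simp: tendsto_fun_iff)
qed

lemma continuous_on_sequentially_on_coordinates:
  fixes h :: "('i \<Rightarrow> real) \<Rightarrow> 'b::topological_space"
  assumes C: "countable C"
    and seq: "\<And>s t. (\<forall>k. s k \<in> T) \<Longrightarrow> t \<in> T \<Longrightarrow> (\<forall>i\<in>C. (\<lambda>k. s k i) \<longlonglongrightarrow> t i) \<Longrightarrow> (\<lambda>k. h (s k)) \<longlonglongrightarrow> h t"
  shows "continuous_on T h"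
  unfolding continuous_on_topological
proof (intro ballI allI impI)
  fix t B assume t: "t \<in> T" and B: "open B" "h t \<in> B"
  show "\<exists>A. open A \<and> t \<in> A \<and> (\<forall>y\<in>T. y \<in> A \<longrightarrow> h y \<in> B)"
  proof (rule ccontr)
    assume "\<not> ?thesis"
    then have "\<exists>y\<in>{y\<in>T. h y \<notin> B}. y \<in> U" if "open U" "t \<in> U" for U using that by blast
    from exists_sequence_tendsto_on_coordinates[OF C this]
    obtain s where s: "\<forall>k. s k \<in> {y\<in>T. h y \<notin> B}" and lim: "\<forall>i\<in>C. (\<lambda>k. s k i) \<longlonglongrightarrow> t i"
      by blast
    then have "(\<lambda>k. h (s k)) \<longlonglongrightarrow> h t" using seq t by blast
    then have "eventually (\<lambda>k. h (s k) \<in> B) sequentially" using B topological_tendstoD by blast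
    then show False using s by (auto simp: eventually_sequentially)
  qed
qed

lemma diagonal_tendsto_on_coordinates:
  fixes Y :: "nat \<Rightarrow> nat \<Rightarrow> 'i \<Rightarrow> real"
  assumes C: "countable C" and Y: "\<And>k i. i \<in> C \<Longrightarrow> (\<lambda>m. Y k m i) \<longlonglongrightarrow> s k i"
    and s: "\<And>i. i \<in> C \<Longrightarrow> (\<lambda>k. s k i) \<longlonglongrightarrow> t i" and P: "\<And>k. eventually (P k) sequentially"
  shows "\<exists>M. (\<forall>k. P k (M k)) \<and> (\<forall>i\<in>C. (\<lambda>k. Y k (M k) i) \<longlonglongrightarrow> t i)"
proof (cases "C = {}")
  case True
  have "\<forall>k. \<exists>m. P k m" using P eventually_sequentially by (metis order_refl)
  then obtain M where "\<And>k. P k (M k)" by metis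
  with True show ?thesis by blast
next
  case False
  define e where "e = from_nat_into C"
  have eC: "e j \<in> C" for j using False by (simp add: e_def from_nat_into)
  define Q where "Q k m \<longleftrightarrow> P k m \<and> (\<forall>j\<in>{..k}. dist (Y k m (e j)) (s k (e j)) < inverse (real (Suc k)))"
    for k m
  have "eventually (Q k) sequentially" for k
  proof -
    have "eventually (\<lambda>m. \<forall>j\<in>{..k}. dist (Y k m (e j)) (s k (e j)) < inverse (real (Suc k))) sequentially"
      by (rule eventually_ball_finite) (simp_all add: tendstoD Y eC)
    with P[of k] show ?thesis unfolding Q_def by (rule eventually_conj)
  qed
  then have "\<forall>k. \<exists>m. Q k m" using eventually_sequentially by (metis order_refl)
  then obtain M where M: "\<And>k. Q k (M k)" by metis
  have "(\<lambda>k. Y k (M k) (e j)) \<longlonglongrightarrow> t (e j)" for j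
  proof (rule LIMSEQ_close_to[OF _ s[OF eC]])
    show "eventually (\<lambda>k. dist (Y k (M k) (e j)) (s k (e j)) < inverse (real (Suc k))) sequentially"
      using M unfolding Q_def eventually_sequentially by auto
  qed
  moreover have "C = range e" using C False by (simp add: e_def range_from_nat_into)
  ultimately show ?thesis using M unfolding Q_def by blast
qed

subsection \<open>Stable coarse pseudometrics\<close>

lemma pseudometric_nonneg:
  assumes "pseudometric d"
  shows "0 \<le> d x y"
proof -
  have "d x x \<le> d x y + d y x" "d x x = 0" "d y x = d x y"
    using assms unfolding pseudometric_def by blast+
  then show ?thesis by linarith
qed

lemma translation_invariant_shift:
  fixes d :: "'a::real_normed_vector \<Rightarrow> 'a \<Rightarrow> real"
  assumes "translation_invariant d"
  shows "d (a + c) b = d a (b - c)"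
  using assms unfolding translation_invariant_def by (metis diff_add_cancel)

lemma translation_invariant_swap:
  fixes d :: "'a::real_normed_vector \<Rightarrow> 'a \<Rightarrow> real"
  assumes "translation_invariant d"
  shows "d a (z - b) = d b (z - a)"
  using translation_invariant_shift[OF assms] by (metis add.commute)

lemma coarse_bounded_of_dist_bounded:
  fixes d :: "'a::real_normed_vector \<Rightarrow> 'a \<Rightarrow> real"
  assumes pm: "pseudometric d" and ce: "coarse_equivalence_Id d" and B: "\<And>n. d (x n) z \<le> B"
  shows "bounded (range x)"
proof -
  have "filterlim (rho_Id d) at_top at_top" using ce unfolding coarse_equivalence_Id_def by blast
  then obtain t where t: "B + 1 \<le> rho_Id d t"
    by (metis (mono_tags) eventually_at_top_linorder filterlim_at_top order_refl)
  have "norm (x n - z) < t" for n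
  proof (rule ccontr)
    assume "\<not> norm (x n - z) < t"
    then have "d (x n) z \<in> {d x y | x y. norm (x - y) \<ge> t}" by (auto simp: not_less)
    moreover have "bdd_below {d x y | x y. norm (x - y) \<ge> t}"
      using pseudometric_nonneg[OF pm] by (auto intro!: bdd_belowI[where m=0])
    ultimately have "rho_Id d t \<le> d (x n) z" unfolding rho_Id_def by (rule cInf_lower)
    then show False using t B[of n] by linarith
  qed
  then have "norm (x n) \<le> t + norm z" for n
    by (smt (verit) norm_triangle_sub)
  then show ?thesis unfolding bounded_iff by blast
qed

lemma coarse_dist_bounded:
  fixes d :: "'a::real_normed_vector \<Rightarrow> 'a \<Rightarrow> real"
  assumes ce: "coarse_equivalence_Id d" and u: "bounded (range u)" and v: "bounded (range v)"
  shows "\<exists>M. \<forall>n m. d (u n) (v m) \<le> M"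
proof -
  obtain a where a: "\<And>n. norm (u n) \<le> a" using u unfolding bounded_iff by blast
  obtain b where b: "\<And>n. norm (v n) \<le> b" using v unfolding bounded_iff by blast
  obtain M where M: "\<And>w. w \<in> {d x y | x y. norm (x - y) \<le> a + b} \<Longrightarrow> w \<le> M"
    using ce unfolding coarse_equivalence_Id_def bdd_above_def by blast
  have "norm (u n - v m) \<le> a + b" for n m
    by (smt (verit) a b norm_triangle_ineq4)
  then show ?thesis using M by blast
qed

lemma stable_iterated_limits_eq:
  fixes d :: "'a::real_normed_vector \<Rightarrow> 'a \<Rightarrow> real"
  assumes pm: "pseudometric d" and st: "stable_pseudometric d" and ce: "coarse_equivalence_Id d"
    and u: "bounded (range u)" and v: "bounded (range v)"
    and F: "\<And>n. (\<lambda>m. d (u n) (v m)) \<longlonglongrightarrow> F n"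
    and G: "\<And>m. (\<lambda>n. d (u n) (v m)) \<longlonglongrightarrow> G m"
  shows "\<exists>L. F \<longlonglongrightarrow> L \<and> G \<longlonglongrightarrow> L"
proof -
  obtain M where M: "\<And>n m. norm (d (u n) (v m)) \<le> M"
    using coarse_dist_bounded[OF ce u v] pseudometric_nonneg[OF pm] by fastforce
  have "norm (F n) \<le> M" "norm (G n) \<le> M" for n
    by (rule Lim_norm_ubound[OF _ F] Lim_norm_ubound[OF _ G]; use M in simp)+
  then have bdd: "bounded (range F)" "bounded (range G)"
    unfolding bounded_iff by blast+
  have subseq_limits_eq: "\<alpha> = \<beta>"
    if r: "strict_mono r" and s: "strict_mono s" and a: "(F \<circ> r) \<longlonglongrightarrow> \<alpha>" and b: "(G \<circ> s) \<longlonglongrightarrow> \<beta>"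
    for r s :: "nat \<Rightarrow> nat" and \<alpha> \<beta>
  proof -
    have "bounded (range (u \<circ> r))" using u by (rule bounded_subset) auto
    moreover have "bounded (range (v \<circ> s))" using v by (rule bounded_subset) auto
    moreover have "(\<lambda>m. d ((u \<circ> r) n) ((v \<circ> s) m)) \<longlonglongrightarrow> (F \<circ> r) n" for n
      using LIMSEQ_subseq_LIMSEQ[OF F[of "r n"] s] by (simp add: o_def)
    moreover have "(\<lambda>n. d ((u \<circ> r) n) ((v \<circ> s) m)) \<longlonglongrightarrow> (G \<circ> s) m" for m
      using LIMSEQ_subseq_LIMSEQ[OF G[of "s m"] r] by (simp add: o_def)
    ultimately show ?thesis using st a b unfolding stable_pseudometric_def by blast
  qed
  obtain \<beta> and s :: "nat \<Rightarrow> nat" where s: "strict_mono s" and b: "(G \<circ> s) \<longlonglongrightarrow> \<beta>"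
    using bounded_imp_convergent_subsequence[OF bdd(2)] by blast
  have F\<beta>: "F \<longlonglongrightarrow> \<beta>"
    by (rule bounded_LIMSEQ_of_subseq_limits[OF bdd(1)]) (use subseq_limits_eq s b in blast)
  have "G \<longlonglongrightarrow> \<beta>"
  proof (rule bounded_LIMSEQ_of_subseq_limits[OF bdd(2)])
    fix r :: "nat \<Rightarrow> nat" and \<alpha> assume "strict_mono r" "(G \<circ> r) \<longlonglongrightarrow> \<alpha>"
    then show "\<alpha> = \<beta>" using subseq_limits_eq[of id r \<beta> \<alpha>] F\<beta> by (simp add: strict_mono_def)
  qed
  with F\<beta> show ?thesis by blast
qed

subsection \<open>Convolution of types\<close>

locale convolution_setting =
  fixes d :: "'a::real_normed_vector \<Rightarrow> 'a \<Rightarrow> real" and D :: "'a set"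
  assumes pm: "pseudometric d" and ti: "translation_invariant d" and st: "stable_pseudometric d"
    and ce: "coarse_equivalence_Id d" and Dlin: "Q_linear_subspace D" and Dcount: "countable D"
begin

lemma zero_in_D: "0 \<in> D"
  using Dlin unfolding Q_linear_subspace_def by blast

lemma add_in_D: "a \<in> D \<Longrightarrow> b \<in> D \<Longrightarrow> a + b \<in> D"
  using Dlin unfolding Q_linear_subspace_def by blast

lemma diff_scaleR_in_D:
  assumes "z \<in> D" and "a \<in> D"
  shows "z - of_rat q *\<^sub>R a \<in> D"
proof -
  have "of_rat (- q) *\<^sub>R a \<in> D" using Dlin assms(2) unfolding Q_linear_subspace_def by blast
  then have "z + of_rat (- q) *\<^sub>R a \<in> D" by (rule add_in_D[OF assms(1)])
  then show ?thesis by (simp add: of_rat_minus)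
qed

abbreviation type_coords :: "(rat \<times> 'a) set" where
  "type_coords \<equiv> UNIV \<times> D"

lemma types_space_vanishing: "types_space d D \<subseteq> {f. \<forall>i. i \<notin> type_coords \<longrightarrow> f i = 0}"
  unfolding types_space_def
  by (rule closure_minimal[OF _ closed_vanishing_outside]) (auto simp: xbar_def)

lemma defining_seq_exists:
  assumes "\<sigma> \<in> types_space d D"
  obtains x where "defining_seq d D \<sigma> x"
proof -
  have "countable type_coords" using Dcount by simp
  moreover have "xbar d D ` D \<subseteq> {f. \<forall>i. i \<notin> type_coords \<longrightarrow> f i = 0}"
    by (auto simp: xbar_def)
  moreover have "\<sigma> \<in> closure (xbar d D ` D)" using assms unfolding types_space_def .
  ultimately have "\<exists>s. (\<forall>n. s n \<in> xbar d D ` D) \<and> s \<longlonglongrightarrow> \<sigma>"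
    by (rule closure_imp_sequence_vanishing_outside)
  then obtain s where s: "\<And>n. s n \<in> xbar d D ` D" and lim: "s \<longlonglongrightarrow> \<sigma>"
    by blast
  have "\<forall>n. \<exists>a. a \<in> D \<and> s n = xbar d D a" using s by blast
  then obtain x where x: "\<forall>n. x n \<in> D \<and> s n = xbar d D (x n)"
    using choice[of "\<lambda>n a. a \<in> D \<and> s n = xbar d D a"] by blast
  then have "(\<lambda>n. xbar d D (x n)) = s" by auto
  with lim have "(\<lambda>n. xbar d D (x n)) \<longlonglongrightarrow> \<sigma>" by simp
  with x show ?thesis using that unfolding defining_seq_def by blast
qed

lemma defining_seq_in_types_space:
  assumes "defining_seq d D \<sigma> x"
  shows "\<sigma> \<in> types_space d D"
  unfolding types_space_def
proof (rule Lim_in_closed_set[OF closed_closure _ trivial_limit_sequentially])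
  show "(\<lambda>n. xbar d D (x n)) \<longlonglongrightarrow> \<sigma>" using assms unfolding defining_seq_def by blast
  have "xbar d D (x n) \<in> closure (xbar d D ` D)" for n
    using assms unfolding defining_seq_def by (blast intro: closure_subset[THEN subsetD])
  then show "\<forall>\<^sub>F n in sequentially. xbar d D (x n) \<in> closure (xbar d D ` D)"
    by (simp add: always_eventually)
qed

lemma defining_seq_tendsto:
  assumes "defining_seq d D \<sigma> x" and "w \<in> D"
  shows "(\<lambda>n. d (of_rat q *\<^sub>R x n) w) \<longlonglongrightarrow> \<sigma> (q, w)"
proof -
  have "(\<lambda>n. xbar d D (x n) (q, w)) \<longlonglongrightarrow> \<sigma> (q, w)"
    using assms(1) unfolding defining_seq_def tendsto_fun_iff by blast
  then show ?thesis using assms(2) by (simp add: xbar_def)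
qed

lemma defining_seq_bounded:
  assumes "defining_seq d D \<sigma> x"
  shows "bounded (range x)"
proof -
  have "(\<lambda>n. d (x n) 0) \<longlonglongrightarrow> \<sigma> (1, 0)"
    using defining_seq_tendsto[OF assms zero_in_D, of 1] by simp
  then obtain K where "\<And>n. norm (d (x n) 0) \<le> K"
    using convergent_imp_Bseq convergent_def Bseq_def by metis
  then show ?thesis
    using coarse_bounded_of_dist_bounded[OF pm ce] by (metis abs_le_D1 real_norm_def)
qed

text \<open>\<open>type_shift \<tau> a\<close> translates the type \<open>\<tau>\<close> by \<open>a\<close>: it is the type of \<open>a + y\<close> when \<open>\<tau>\<close> is
  the type of \<open>y\<close> (\<open>xbar_add\<close>).\<close>

definition type_shift :: "(rat \<times> 'a \<Rightarrow> real) \<Rightarrow> 'a \<Rightarrow> rat \<times> 'a \<Rightarrow> real" where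
  "type_shift \<tau> a = (\<lambda>(q, z). if z \<in> D then \<tau> (q, z - of_rat q *\<^sub>R a) else 0)"

lemma xbar_add:
  assumes "a \<in> D"
  shows "xbar d D (a + b) = type_shift (xbar d D b) a"
proof
  fix i :: "rat \<times> 'a"
  obtain q z where i: "i = (q, z)" by fastforce
  have "d (of_rat q *\<^sub>R (a + b)) z = d (of_rat q *\<^sub>R b) (z - of_rat q *\<^sub>R a)"
    using translation_invariant_shift[OF ti] by (metis add.commute scaleR_add_right)
  then show "xbar d D (a + b) i = type_shift (xbar d D b) a i"
    using diff_scaleR_in_D[OF _ assms] by (simp add: i xbar_def type_shift_def)
qed

lemma tendsto_type_shift:
  assumes "(f \<longlongrightarrow> \<tau>) F"
  shows "((\<lambda>c. type_shift (f c) a) \<longlongrightarrow> type_shift \<tau> a) F"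
  unfolding tendsto_fun_iff
proof
  fix i :: "rat \<times> 'a"
  obtain q z where i: "i = (q, z)" by fastforce
  have "((\<lambda>c. f c (q, z - of_rat q *\<^sub>R a)) \<longlongrightarrow> \<tau> (q, z - of_rat q *\<^sub>R a)) F"
    using assms unfolding tendsto_fun_iff by blast
  then show "((\<lambda>c. type_shift (f c) a i) \<longlongrightarrow> type_shift \<tau> a i) F"
    by (simp add: i type_shift_def)
qed

lemma tendsto_xbar_add:
  assumes "a \<in> D" and "defining_seq d D \<tau> y"
  shows "(\<lambda>m. xbar d D (a + y m)) \<longlonglongrightarrow> type_shift \<tau> a"
  using tendsto_type_shift[of "\<lambda>m. xbar d D (y m)"] assms
  unfolding defining_seq_def by (simp add: xbar_add)

lemma iterated_limits_eq:
  assumes x: "defining_seq d D \<sigma> x" and y: "defining_seq d D \<tau> y" and z: "z \<in> D"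
  shows "\<exists>L. (\<lambda>n. \<tau> (q, z - of_rat q *\<^sub>R x n)) \<longlonglongrightarrow> L \<and> (\<lambda>m. \<sigma> (q, z - of_rat q *\<^sub>R y m)) \<longlonglongrightarrow> L"
proof -
  let ?c = "of_rat q :: real"
  have xD: "x n \<in> D" and yD: "y n \<in> D" for n using x y unfolding defining_seq_def by auto
  have "bounded (range (\<lambda>n. ?c *\<^sub>R x n))"
    using bounded_scaling[OF defining_seq_bounded[OF x], of ?c] by (simp add: image_image)
  moreover have "bounded (range (\<lambda>m. z - ?c *\<^sub>R y m))"
    using bounded_translation[OF bounded_scaling[OF defining_seq_bounded[OF y], of "- ?c"], of z]
    by (simp add: image_image)
  moreover have "(\<lambda>m. d (?c *\<^sub>R x n) (z - ?c *\<^sub>R y m)) \<longlonglongrightarrow> \<tau> (q, z - ?c *\<^sub>R x n)" for n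
    using defining_seq_tendsto[OF y diff_scaleR_in_D[OF z xD]]
    by (simp add: translation_invariant_swap[OF ti, of "?c *\<^sub>R x n"])
  moreover have "(\<lambda>n. d (?c *\<^sub>R x n) (z - ?c *\<^sub>R y m)) \<longlonglongrightarrow> \<sigma> (q, z - ?c *\<^sub>R y m)" for m
    using defining_seq_tendsto[OF x diff_scaleR_in_D[OF z yD]] .
  ultimately show ?thesis by (rule stable_iterated_limits_eq[OF pm st ce])
qed

lemma type_shift_iterated_limits_eq:
  assumes x: "defining_seq d D \<sigma> x" and y: "defining_seq d D \<tau> y"
  shows "\<exists>\<rho>. (\<lambda>n. type_shift \<tau> (x n)) \<longlonglongrightarrow> \<rho> \<and> (\<lambda>m. type_shift \<sigma> (y m)) \<longlonglongrightarrow> \<rho>"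
proof -
  have "\<exists>L. (\<lambda>n. type_shift \<tau> (x n) i) \<longlonglongrightarrow> L \<and> (\<lambda>m. type_shift \<sigma> (y m) i) \<longlonglongrightarrow> L" for i
  proof -
    obtain q z where i: "i = (q, z)" by fastforce
    show ?thesis
      using iterated_limits_eq[OF x y, of z q] by (cases "z \<in> D") (auto simp: i type_shift_def)
  qed
  then obtain \<rho> where "\<And>i. (\<lambda>n. type_shift \<tau> (x n) i) \<longlonglongrightarrow> \<rho> i \<and> (\<lambda>m. type_shift \<sigma> (y m) i) \<longlonglongrightarrow> \<rho> i"
    by metis
  then show ?thesis unfolding tendsto_fun_iff by blast
qed

lemma conv_eqI:
  assumes \<tau>: "\<tau> \<in> types_space d D" and x: "defining_seq d D \<sigma> x"
    and \<rho>: "(\<lambda>n. type_shift \<tau> (x n)) \<longlonglongrightarrow> \<rho>"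
  shows "conv d D \<sigma> \<tau> = \<rho>"
  unfolding conv_def
proof (rule the_equality)
  show "\<forall>x' y'. defining_seq d D \<sigma> x' \<and> defining_seq d D \<tau> y' \<longrightarrow>
      (\<exists>f. (\<forall>n. (\<lambda>m. xbar d D (x' n + y' m)) \<longlonglongrightarrow> f n) \<and> f \<longlonglongrightarrow> \<rho>)"
  proof (intro allI impI, elim conjE)
    fix x' y' assume x': "defining_seq d D \<sigma> x'" and y': "defining_seq d D \<tau> y'"
    obtain \<rho>' where \<rho>': "(\<lambda>n. type_shift \<tau> (x' n)) \<longlonglongrightarrow> \<rho>'" "(\<lambda>m. type_shift \<sigma> (y' m)) \<longlonglongrightarrow> \<rho>'"
      using type_shift_iterated_limits_eq[OF x' y'] by blast
    obtain \<rho>'' where \<rho>'': "(\<lambda>n. type_shift \<tau> (x n)) \<longlonglongrightarrow> \<rho>''" "(\<lambda>m. type_shift \<sigma> (y' m)) \<longlonglongrightarrow> \<rho>''"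
      using type_shift_iterated_limits_eq[OF x y'] by blast
    have "\<rho>' = \<rho>" using LIMSEQ_fun_unique \<rho> \<rho>' \<rho>'' by metis
    moreover have "(\<lambda>m. xbar d D (x' n + y' m)) \<longlonglongrightarrow> type_shift \<tau> (x' n)" for n
      using x' y' tendsto_xbar_add unfolding defining_seq_def by blast
    ultimately show "\<exists>f. (\<forall>n. (\<lambda>m. xbar d D (x' n + y' m)) \<longlonglongrightarrow> f n) \<and> f \<longlonglongrightarrow> \<rho>"
      using \<rho>'(1) by (intro exI[where x="\<lambda>n. type_shift \<tau> (x' n)"]) auto
  qed
next
  fix r assume r: "\<forall>x' y'. defining_seq d D \<sigma> x' \<and> defining_seq d D \<tau> y' \<longrightarrow>
      (\<exists>f. (\<forall>n. (\<lambda>m. xbar d D (x' n + y' m)) \<longlonglongrightarrow> f n) \<and> f \<longlonglongrightarrow> r)"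
  obtain y where y: "defining_seq d D \<tau> y" using defining_seq_exists[OF \<tau>] .
  then obtain f where f: "\<And>n. (\<lambda>m. xbar d D (x n + y m)) \<longlonglongrightarrow> f n" and fr: "f \<longlonglongrightarrow> r"
    using r x by blast
  have f_eq: "f = (\<lambda>n. type_shift \<tau> (x n))"
  proof
    fix n
    have "(\<lambda>m. xbar d D (x n + y m)) \<longlonglongrightarrow> type_shift \<tau> (x n)"
      using x y by (intro tendsto_xbar_add) (auto simp: defining_seq_def)
    then show "f n = type_shift \<tau> (x n)" by (rule LIMSEQ_fun_unique[OF f])
  qed
  have "(\<lambda>n. type_shift \<tau> (x n)) \<longlonglongrightarrow> r" using fr unfolding f_eq .
  then show "r = \<rho>" using \<rho> by (rule LIMSEQ_fun_unique)
qed

lemma tendsto_conv_left: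
  assumes "\<tau> \<in> types_space d D" and x: "defining_seq d D \<sigma> x"
  shows "(\<lambda>n. type_shift \<tau> (x n)) \<longlonglongrightarrow> conv d D \<sigma> \<tau>"
proof -
  obtain y where "defining_seq d D \<tau> y" using defining_seq_exists[OF assms(1)] .
  then obtain \<rho> where \<rho>: "(\<lambda>n. type_shift \<tau> (x n)) \<longlonglongrightarrow> \<rho>"
    using type_shift_iterated_limits_eq[OF x] by blast
  have "conv d D \<sigma> \<tau> = \<rho>" using \<rho> by (rule conv_eqI[OF assms])
  with \<rho> show ?thesis by (simp only:)
qed

lemma tendsto_conv_right:
  assumes "\<sigma> \<in> types_space d D" and y: "defining_seq d D \<tau> y"
  shows "(\<lambda>m. type_shift \<sigma> (y m)) \<longlonglongrightarrow> conv d D \<sigma> \<tau>"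
proof -
  obtain x where x: "defining_seq d D \<sigma> x" using defining_seq_exists[OF assms(1)] .
  then obtain \<rho> where \<rho>: "(\<lambda>n. type_shift \<tau> (x n)) \<longlonglongrightarrow> \<rho>" "(\<lambda>m. type_shift \<sigma> (y m)) \<longlonglongrightarrow> \<rho>"
    using type_shift_iterated_limits_eq[OF x y] by blast
  have "conv d D \<sigma> \<tau> = \<rho>"
    using \<rho>(1) by (rule conv_eqI[OF defining_seq_in_types_space[OF y] x])
  with \<rho>(2) show ?thesis by (simp only:)
qed

lemma conv_commute:
  assumes "\<sigma> \<in> types_space d D" and "\<tau> \<in> types_space d D"
  shows "conv d D \<sigma> \<tau> = conv d D \<tau> \<sigma>"
proof -
  obtain x where x: "defining_seq d D \<sigma> x" using defining_seq_exists[OF assms(1)] .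
  show ?thesis
    using LIMSEQ_fun_unique[OF tendsto_conv_left[OF assms(2) x] tendsto_conv_right[OF assms(2) x]] .
qed

lemma type_shift_in_types_space:
  assumes a: "a \<in> D" and \<tau>: "\<tau> \<in> types_space d D"
  shows "type_shift \<tau> a \<in> types_space d D"
proof -
  obtain y where y: "defining_seq d D \<tau> y" using defining_seq_exists[OF \<tau>] .
  then have "defining_seq d D (type_shift \<tau> a) (\<lambda>m. a + y m)"
    using add_in_D[OF a] tendsto_xbar_add[OF a y] unfolding defining_seq_def by blast
  then show ?thesis by (rule defining_seq_in_types_space)
qed

lemma conv_in_types_space:
  assumes \<sigma>: "\<sigma> \<in> types_space d D" and \<tau>: "\<tau> \<in> types_space d D"
  shows "conv d D \<sigma> \<tau> \<in> types_space d D"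
proof -
  obtain x where x: "defining_seq d D \<sigma> x" using defining_seq_exists[OF \<sigma>] .
  then have "\<forall>\<^sub>F n in sequentially. type_shift \<tau> (x n) \<in> types_space d D"
    using type_shift_in_types_space[OF _ \<tau>] unfolding defining_seq_def by simp
  then show ?thesis unfolding types_space_def
    by (rule Lim_in_closed_set[OF closed_closure _ trivial_limit_sequentially tendsto_conv_left[OF \<tau> x]])
qed

lemma defining_seq_diagonal:
  assumes Y: "\<And>k. defining_seq d D (s k) (Y k)" and \<tau>: "\<tau> \<in> types_space d D"
    and lim: "\<forall>j\<in>type_coords. (\<lambda>k. s k j) \<longlonglongrightarrow> \<tau> j" and P: "\<And>k. eventually (P k) sequentially"
  shows "\<exists>M. (\<forall>k. P k (M k)) \<and> defining_seq d D \<tau> (\<lambda>k. Y k (M k))"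
proof -
  have "countable type_coords" using Dcount by simp
  moreover have "(\<lambda>m. xbar d D (Y k m) j) \<longlonglongrightarrow> s k j" for k j
    using Y unfolding defining_seq_def tendsto_fun_iff by blast
  ultimately obtain M where M: "\<And>k. P k (M k)"
    and diag: "\<forall>j\<in>type_coords. (\<lambda>k. xbar d D (Y k (M k)) j) \<longlonglongrightarrow> \<tau> j"
    using diagonal_tendsto_on_coordinates[of type_coords "\<lambda>k m. xbar d D (Y k m)" s \<tau> P] lim P
    by blast
  have "(\<lambda>k. xbar d D (Y k (M k)) j) \<longlonglongrightarrow> \<tau> j" for j
  proof (cases "j \<in> type_coords")
    case False
    then have "\<tau> j = 0" using types_space_vanishing \<tau> by blast
    moreover have "xbar d D (Y k (M k)) j = 0" for k
      using False by (auto simp: xbar_def split: prod.split)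
    ultimately show ?thesis by simp
  qed (use diag in blast)
  moreover have "Y k (M k) \<in> D" for k using Y unfolding defining_seq_def by blast
  ultimately show ?thesis using M unfolding defining_seq_def tendsto_fun_iff by blast
qed

lemma continuous_on_conv_right:
  assumes \<sigma>: "\<sigma> \<in> types_space d D"
  shows "continuous_on (types_space d D) (\<lambda>\<tau>. conv d D \<sigma> \<tau>)"
proof (rule continuous_on_coordinatewise_then_product)
  fix i :: "rat \<times> 'a"
  show "continuous_on (types_space d D) (\<lambda>\<tau>. conv d D \<sigma> \<tau> i)"
  proof (rule continuous_on_sequentially_on_coordinates)
    show "countable type_coords" using Dcount by simp
  next
    fix s \<tau> assume s: "\<forall>k. s k \<in> types_space d D" and \<tau>: "\<tau> \<in> types_space d D"
      and lim: "\<forall>j\<in>type_coords. (\<lambda>k. s k j) \<longlonglongrightarrow> \<tau> j"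
    have "\<forall>k. \<exists>y. defining_seq d D (s k) y" using s defining_seq_exists by metis
    then obtain Y where Y: "\<And>k. defining_seq d D (s k) (Y k)" by metis
    have "(\<lambda>m. type_shift \<sigma> (Y k m) i) \<longlonglongrightarrow> conv d D \<sigma> (s k) i" for k
      using tendsto_conv_right[OF \<sigma> Y] unfolding tendsto_fun_iff by blast
    then have "eventually (\<lambda>m. dist (type_shift \<sigma> (Y k m) i) (conv d D \<sigma> (s k) i) < inverse (real (Suc k))) sequentially" for k
      by (rule tendstoD) simp
    from defining_seq_diagonal[where P = "\<lambda>k m. dist (type_shift \<sigma> (Y k m) i) (conv d D \<sigma> (s k) i) < inverse (real (Suc k))",
        OF Y \<tau> lim this]
    obtain M
      where close: "\<And>k. dist (type_shift \<sigma> (Y k (M k)) i) (conv d D \<sigma> (s k) i) < inverse (real (Suc k))"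
        and diag: "defining_seq d D \<tau> (\<lambda>k. Y k (M k))"
      by blast
    have "(\<lambda>k. type_shift \<sigma> (Y k (M k)) i) \<longlonglongrightarrow> conv d D \<sigma> \<tau> i"
      using tendsto_conv_right[OF \<sigma> diag] unfolding tendsto_fun_iff by blast
    then show "(\<lambda>k. conv d D \<sigma> (s k) i) \<longlonglongrightarrow> conv d D \<sigma> \<tau> i"
      by (rule LIMSEQ_close_to[rotated]) (use close in \<open>simp add: dist_commute\<close>)
  qed
qed

end

theorem lemma4p5:
  fixes d :: "'a::banach \<Rightarrow> 'a \<Rightarrow> real" and \<Delta> :: "'a set"
  assumes separable: "\<exists>C::'a set. countable C \<and> closure C = UNIV"
    and inf_dim: "\<not> (\<exists>B::'a set. finite B \<and> span B = UNIV)"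
    and pm: "pseudometric d"
    and ti: "translation_invariant d"
    and st: "stable_pseudometric d"
    and ce: "coarse_equivalence_Id d"
    and Dcount: "countable \<Delta>"
    and Ddense: "closure \<Delta> = UNIV"
    and Dlin: "Q_linear_subspace \<Delta>"
  shows "(\<forall>\<sigma>\<in>types_space d \<Delta>. \<forall>\<tau>\<in>types_space d \<Delta>. conv d \<Delta> \<sigma> \<tau> \<in> types_space d \<Delta>)
    \<and> (\<forall>\<sigma>\<in>types_space d \<Delta>. continuous_on (types_space d \<Delta>) (\<lambda>\<tau>. conv d \<Delta> \<sigma> \<tau>))
    \<and> (\<forall>\<tau>\<in>types_space d \<Delta>. continuous_on (types_space d \<Delta>) (\<lambda>\<sigma>. conv d \<Delta> \<sigma> \<tau>))"
proof -
  interpret convolution_setting d \<Delta>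
    using pm ti st ce Dlin Dcount by unfold_locales
  have "continuous_on (types_space d \<Delta>) (\<lambda>\<sigma>. conv d \<Delta> \<sigma> \<tau>)" if "\<tau> \<in> types_space d \<Delta>" for \<tau>
    using continuous_on_conv_right[OF that]
    by (rule continuous_on_cong[THEN iffD1, rotated 2]) (simp_all add: conv_commute that)
  then show ?thesis using conv_in_types_space continuous_on_conv_right by blast
qed

end
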